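(* Let $A\in\mathbb{C}^{m\times n}$ and $b\in\mathbb{C}^m$ have computable entries. Then the pseudoinverse $A^\dagger$, the real number $\|A^\dagger\|_F$, the real number $\min_{x\in\mathbb{C}^n}\|Ax-b\|_2$, the vector $\hat x_{(A,b)}=A^\dagger b$, the real number $\|A^\dagger b\|_2$, and the real number $\|A\|_F\|A^\dagger\|_F$ all consist of computable entries (are computable).
   Context: $A^\dagger\in\mathbb{C}^{n\times m}$ is the Moore–Penrose pseudoinverse of $A$ (the unique matrix with $AA^\dagger A=A$, $A^\dagger AA^\dagger=A^\dagger$, $(AA^\dagger)^H=AA^\dagger$, $(A^\dagger A)^H=A^\dagger A$); $A^\dagger b$ is the minimal-Euclidean-norm minimizer of $\|Ax-b\|_2$. $\|\cdot\|_F$ is the Frobenius norm, $\|\cdot\|_2$ the Euclidean norm. A real number $x$ is computable if there are recursive functions $a,b,s:\mathbb{N}\to\mathbb{N}$ with $b(k)\ne0$ such that $r_k=(-1)^{s(k)}a(k)/b(k)$ satisfies $|r_k-x|\le 2^{-k}$ for all $k$; a complex number is computable if its real and imaginary parts are, and a vector/matrix is computable if all its entries are. *)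

theory Defs
  imports "HOL-Analysis.Analysis"
begin

definition prec :: "(nat list \<Rightarrow> nat) \<Rightarrow> (nat list \<Rightarrow> nat) \<Rightarrow> nat list \<Rightarrow> nat" where
  "prec g h xs = (case xs of [] \<Rightarrow> 0
     | y # ys \<Rightarrow> rec_nat (g ys) (\<lambda>k acc. h (k # acc # ys)) y)"

text \<open>total_rec n f: f is a total recursive function of arity n (its values on
argument lists of length different from n are irrelevant). Minimisation is only
applied to regular functions, which by Kleene's normal form theorem yields exactly
the total recursive functions.\<close>
inductive total_rec :: "nat \<Rightarrow> (nat list \<Rightarrow> nat) \<Rightarrow> bool" where
  zero: "total_rec n (\<lambda>_. 0)"
| succ: "total_rec 1 (\<lambda>xs. Suc (hd xs))"
| proj: "i < n \<Longrightarrow> total_rec n (\<lambda>xs. xs ! i)"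
| comp: "total_rec m f \<Longrightarrow> length gs = m \<Longrightarrow> (\<forall>g\<in>set gs. total_rec n g) \<Longrightarrow>
         total_rec n (\<lambda>xs. f (map (\<lambda>g. g xs) gs))"
| prim_rec: "total_rec n g \<Longrightarrow> total_rec (Suc (Suc n)) h \<Longrightarrow> total_rec (Suc n) (prec g h)"
| mu: "total_rec (Suc n) g \<Longrightarrow> (\<forall>xs. length xs = n \<longrightarrow> (\<exists>y. g (y # xs) = 0)) \<Longrightarrow>
       total_rec n (\<lambda>xs. LEAST y. g (y # xs) = 0)"

definition recursive_fn :: "(nat \<Rightarrow> nat) \<Rightarrow> bool" where
  "recursive_fn f \<longleftrightarrow> (\<exists>g. total_rec 1 g \<and> (\<forall>k. f k = g [k]))"

definition computable_real :: "real \<Rightarrow> bool" where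
  "computable_real x \<longleftrightarrow> (\<exists>a b s. recursive_fn a \<and> recursive_fn b \<and> recursive_fn s \<and>
     (\<forall>k. b k \<noteq> 0 \<and>
        \<bar>(-1) ^ (s k) * real (a k) / real (b k) - x\<bar> \<le> 1 / 2 ^ k))"

definition computable_complex :: "complex \<Rightarrow> bool" where
  "computable_complex z \<longleftrightarrow> computable_real (Re z) \<and> computable_real (Im z)"

definition computable_vec :: "complex ^ 'n \<Rightarrow> bool" where
  "computable_vec v \<longleftrightarrow> (\<forall>i. computable_complex (v $ i))"

definition computable_mat :: "complex ^ 'n ^ 'm \<Rightarrow> bool" where
  "computable_mat A \<longleftrightarrow> (\<forall>i j. computable_complex (A $ i $ j))"

definition conj_transpose :: "complex ^ 'n ^ 'm \<Rightarrow> complex ^ 'm ^ 'n" where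
  "conj_transpose A = (\<chi> i j. cnj (A $ j $ i))"

definition pinv :: "complex ^ 'n ^ 'm \<Rightarrow> complex ^ 'm ^ 'n" where
  "pinv A = (THE X. A ** X ** A = A \<and> X ** A ** X = X \<and>
                    conj_transpose (A ** X) = A ** X \<and> conj_transpose (X ** A) = X ** A)"

definition frob_norm :: "complex ^ 'n ^ 'm \<Rightarrow> real" where
  "frob_norm A = sqrt (\<Sum>i\<in>UNIV. \<Sum>j\<in>UNIV. (cmod (A $ i $ j))\<^sup>2)"

definition vec_norm2 :: "complex ^ 'n \<Rightarrow> real" where
  "vec_norm2 v = sqrt (\<Sum>i\<in>UNIV. (cmod (v $ i))\<^sup>2)"

end

(* Computable reals are closed under the field operations and square roots: for each operation
   the recursive approximation sequences of the result are built explicitly from those of the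
   arguments, with precision shifts absorbing the error growth. Hence the computable complex
   numbers form a subfield of the complex numbers, and linear algebra over that subfield gives
   every matrix C with computable entries a computable generalized inverse G, C G C = C.
   For C = A^H A A^H, Zlobec's formula pinv A = A^H G A^H then yields the pseudoinverse by
   computable matrix arithmetic. The remaining quantities are norms, i.e. square roots of finite
   sums of squared moduli; the least-squares minimum is attained at (pinv A) b because the
   residual A (pinv A) b - b is orthogonal to the range of A. *)

theory Submission
  imports Defs
begin

section \<open>Total recursive functions\<close>

definition recursive_on :: "nat \<Rightarrow> (nat list \<Rightarrow> nat) \<Rightarrow> bool" where
  "recursive_on n f \<longleftrightarrow> (\<exists>g. total_rec n g \<and> (\<forall>xs. length xs = n \<longrightarrow> f xs = g xs))"

lemma recursive_onI: "total_rec n f \<Longrightarrow> recursive_on n f"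
  unfolding recursive_on_def by blast

lemma recursive_on_cong:
  "recursive_on n f \<Longrightarrow> (\<And>xs. length xs = n \<Longrightarrow> f xs = g xs) \<Longrightarrow> recursive_on n g"
  unfolding recursive_on_def by metis

lemma recursive_on_proj: "i < n \<Longrightarrow> recursive_on n (\<lambda>xs. xs ! i)"
  by (rule recursive_onI, rule total_rec.proj)

lemma recursive_on_compose1:
  assumes "recursive_on 1 f" "recursive_on n g"
  shows "recursive_on n (\<lambda>xs. f [g xs])"
proof -
  obtain f' where f': "total_rec 1 f'" "\<And>xs. length xs = 1 \<Longrightarrow> f xs = f' xs"
    using assms(1) unfolding recursive_on_def by blast
  obtain g' where g': "total_rec n g'" "\<And>xs. length xs = n \<Longrightarrow> g xs = g' xs"
    using assms(2) unfolding recursive_on_def by blast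
  have "total_rec n (\<lambda>xs. f' (map (\<lambda>g. g xs) [g']))"
    by (rule total_rec.comp[OF f'(1)]) (auto simp: g'(1))
  then show ?thesis
    by (rule recursive_onI[THEN recursive_on_cong]) (simp add: f'(2) g'(2))
qed

lemma recursive_on_compose2:
  assumes "recursive_on 2 f" "recursive_on n g" "recursive_on n h"
  shows "recursive_on n (\<lambda>xs. f [g xs, h xs])"
proof -
  obtain f' where f': "total_rec 2 f'" "\<And>xs. length xs = 2 \<Longrightarrow> f xs = f' xs"
    using assms(1) unfolding recursive_on_def by blast
  obtain g' where g': "total_rec n g'" "\<And>xs. length xs = n \<Longrightarrow> g xs = g' xs"
    using assms(2) unfolding recursive_on_def by blast
  obtain h' where h': "total_rec n h'" "\<And>xs. length xs = n \<Longrightarrow> h xs = h' xs"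
    using assms(3) unfolding recursive_on_def by blast
  have "total_rec n (\<lambda>xs. f' (map (\<lambda>g. g xs) [g', h']))"
    by (rule total_rec.comp[OF f'(1)]) (auto simp: g'(1) h'(1))
  then show ?thesis
    by (rule recursive_onI[THEN recursive_on_cong]) (simp add: f'(2) g'(2) h'(2))
qed

lemma prec_Cons: "prec g h (y # ys) = rec_nat (g ys) (\<lambda>k acc. h (k # acc # ys)) y"
  by (simp add: prec_def)

lemma recursive_on_prec:
  assumes "recursive_on n g" "recursive_on (Suc (Suc n)) h"
  shows "recursive_on (Suc n) (prec g h)"
proof -
  obtain g' where g': "total_rec n g'" "\<And>xs. length xs = n \<Longrightarrow> g xs = g' xs"
    using assms(1) unfolding recursive_on_def by blast
  obtain h' where h': "total_rec (Suc (Suc n)) h'"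
    "\<And>xs. length xs = Suc (Suc n) \<Longrightarrow> h xs = h' xs"
    using assms(2) unfolding recursive_on_def by blast
  show ?thesis
  proof (rule recursive_onI[OF total_rec.prim_rec[OF g'(1) h'(1)], THEN recursive_on_cong])
    fix xs :: "nat list"
    assume "length xs = Suc n"
    then obtain y ys where xs: "xs = y # ys" "length ys = n"
      by (cases xs) auto
    then have "(\<lambda>k acc. h' (k # acc # ys)) = (\<lambda>k acc. h (k # acc # ys))"
      using h'(2) by auto
    then show "prec g' h' xs = prec g h xs"
      by (simp add: xs prec_Cons g'(2))
  qed
qed

lemma recursive_on_prec1: "recursive_on 0 g \<Longrightarrow> recursive_on 2 h \<Longrightarrow> recursive_on 1 (prec g h)"
  using recursive_on_prec[of 0 g h] by (simp add: numeral_2_eq_2)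

lemma recursive_on_prec2: "recursive_on 1 g \<Longrightarrow> recursive_on 3 h \<Longrightarrow> recursive_on 2 (prec g h)"
  using recursive_on_prec[of 1 g h] by (simp add: numeral_2_eq_2 numeral_3_eq_3)

lemma recursive_on_Least:
  assumes "recursive_on (Suc n) g" "\<And>xs. length xs = n \<Longrightarrow> \<exists>y. g (y # xs) = 0"
  shows "recursive_on n (\<lambda>xs. LEAST y. g (y # xs) = 0)"
proof -
  obtain g' where g': "total_rec (Suc n) g'" "\<And>xs. length xs = Suc n \<Longrightarrow> g xs = g' xs"
    using assms(1) unfolding recursive_on_def by blast
  have "total_rec n (\<lambda>xs. LEAST y. g' (y # xs) = 0)"
    by (rule total_rec.mu[OF g'(1)]) (use assms(2) g'(2) in fastforce)
  then show ?thesis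
    by (rule recursive_onI[THEN recursive_on_cong]) (simp add: g'(2))
qed

lemma recursive_on_const: "recursive_on n (\<lambda>_. c)"
proof (induction c)
  case 0
  show ?case by (rule recursive_onI, rule total_rec.zero)
next
  case (Suc c)
  from recursive_on_compose1[OF recursive_onI[OF total_rec.succ] Suc] show ?case by simp
qed

lemma length_2_conv: "length xs = 2 \<longleftrightarrow> (\<exists>a b. xs = [a, b])"
  by (auto simp: numeral_eq_Suc length_Suc_conv)

lemma recursive_on_add:
  assumes "recursive_on n f" "recursive_on n g"
  shows "recursive_on n (\<lambda>xs. f xs + g xs)"
proof -
  have "recursive_on 3 (\<lambda>zs. Suc (zs ! 1))"
    using recursive_on_compose1[OF recursive_onI[OF total_rec.succ] recursive_on_proj[of 1 3]]
    by simp
  then have r: "recursive_on 2 (prec (\<lambda>ys. ys ! 0) (\<lambda>zs. Suc (zs ! 1)))"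
    by (intro recursive_on_prec2 recursive_on_proj) (simp_all add: numeral_3_eq_3)
  have e: "rec_nat x (\<lambda>k. Suc) y = y + x" for x y :: nat
    by (induction y) auto
  have "recursive_on 2 (\<lambda>xs. xs ! 0 + xs ! 1)"
    by (rule recursive_on_cong[OF r]) (auto simp: e prec_Cons length_2_conv)
  from recursive_on_compose2[OF this assms] show ?thesis by simp
qed

lemma recursive_on_mult:
  assumes "recursive_on n f" "recursive_on n g"
  shows "recursive_on n (\<lambda>xs. f xs * g xs)"
proof -
  have "recursive_on 3 (\<lambda>zs. zs ! 1 + zs ! 2)"
    by (intro recursive_on_add recursive_on_proj) simp_all
  then have r: "recursive_on 2 (prec (\<lambda>_. 0) (\<lambda>zs. zs ! 1 + zs ! 2))"
    by (intro recursive_on_prec2 recursive_on_const) (simp add: numeral_3_eq_3)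
  have e: "rec_nat 0 (\<lambda>k acc. acc + x) y = y * x" for x y :: nat
    by (induction y) auto
  have "recursive_on 2 (\<lambda>xs. xs ! 0 * xs ! 1)"
    by (rule recursive_on_cong[OF r]) (auto simp: e prec_Cons length_2_conv)
  from recursive_on_compose2[OF this assms] show ?thesis by simp
qed

lemma recursive_on_diff:
  assumes "recursive_on n f" "recursive_on n g"
  shows "recursive_on n (\<lambda>xs. f xs - g xs)"
proof -
  have r1: "recursive_on 1 (prec (\<lambda>_. 0) (\<lambda>zs. zs ! 0))"
    by (intro recursive_on_prec1 recursive_on_const recursive_on_proj) simp
  have e1: "rec_nat 0 (\<lambda>k acc. k) y = y - 1" for y :: nat
    by (induction y) auto
  have "recursive_on 1 (\<lambda>xs. hd xs - 1)"
    by (rule recursive_on_cong[OF r1]) (auto simp: e1 prec_Cons length_Suc_conv)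
  from recursive_on_compose1[OF this recursive_on_proj[of 1 3]]
  have h: "recursive_on 3 (\<lambda>zs. zs ! 1 - 1)"
    by simp
  have r2: "recursive_on 2 (prec (\<lambda>ys. ys ! 0) (\<lambda>zs. zs ! 1 - 1))"
    by (rule recursive_on_prec2[OF recursive_on_proj h]) simp
  have e2: "rec_nat x (\<lambda>k acc. acc - Suc 0) y = x - y" for x y :: nat
    by (induction y) auto
  have "recursive_on 2 (\<lambda>xs. xs ! 1 - xs ! 0)"
    by (rule recursive_on_cong[OF r2]) (auto simp: e2 prec_Cons length_2_conv)
  from recursive_on_compose2[OF this assms(2,1)] show ?thesis by simp
qed

lemma recursive_fn_iff_recursive_on: "recursive_fn f \<longleftrightarrow> recursive_on 1 (\<lambda>xs. f (hd xs))"
proof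
  assume "recursive_fn f"
  then obtain g where g: "total_rec 1 g" "\<forall>k. f k = g [k]"
    unfolding recursive_fn_def by blast
  show "recursive_on 1 (\<lambda>xs. f (hd xs))"
  proof (rule recursive_onI[OF g(1), THEN recursive_on_cong])
    fix xs :: "nat list"
    assume "length xs = 1"
    then obtain k where "xs = [k]"
      by (cases xs) auto
    then show "g xs = f (hd xs)"
      using g(2) by simp
  qed
next
  assume "recursive_on 1 (\<lambda>xs. f (hd xs))"
  then obtain g where "total_rec 1 g" "\<forall>xs. length xs = 1 \<longrightarrow> f (hd xs) = g xs"
    unfolding recursive_on_def by blast
  then show "recursive_fn f"
    unfolding recursive_fn_def by (metis One_nat_def length_Cons list.sel(1) list.size(3))
qed

lemma recursive_fn_compose:
  "recursive_fn \<phi> \<Longrightarrow> recursive_on n f \<Longrightarrow> recursive_on n (\<lambda>xs. \<phi> (f xs))"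
  unfolding recursive_fn_iff_recursive_on by (drule (1) recursive_on_compose1) simp

lemma recursive_fn_const: "recursive_fn (\<lambda>_. c)"
  unfolding recursive_fn_iff_recursive_on by (rule recursive_on_const)

lemma recursive_fn_id: "recursive_fn (\<lambda>k. k)"
  unfolding recursive_fn_iff_recursive_on
  by (rule recursive_on_cong[OF recursive_on_proj[of 0 1]]) (auto simp: length_Suc_conv)

lemma recursive_fn_add: "recursive_fn f \<Longrightarrow> recursive_fn g \<Longrightarrow> recursive_fn (\<lambda>k. f k + g k)"
  unfolding recursive_fn_iff_recursive_on by (rule recursive_on_add)

lemma recursive_fn_mult: "recursive_fn f \<Longrightarrow> recursive_fn g \<Longrightarrow> recursive_fn (\<lambda>k. f k * g k)"
  unfolding recursive_fn_iff_recursive_on by (rule recursive_on_mult)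

lemma recursive_fn_diff: "recursive_fn f \<Longrightarrow> recursive_fn g \<Longrightarrow> recursive_fn (\<lambda>k. f k - g k)"
  unfolding recursive_fn_iff_recursive_on by (rule recursive_on_diff)

lemma recursive_fn_comp:
  assumes "recursive_fn f" "recursive_fn g"
  shows "recursive_fn (\<lambda>k. f (g k))"
  using recursive_fn_compose[OF assms(1) assms(2)[unfolded recursive_fn_iff_recursive_on]]
  unfolding recursive_fn_iff_recursive_on .

lemma recursive_fn_shift: "recursive_fn f \<Longrightarrow> recursive_fn (\<lambda>k. f (k + c))"
  by (erule recursive_fn_comp) (intro recursive_fn_add recursive_fn_id recursive_fn_const)

lemma recursive_fn_power2: "recursive_fn (\<lambda>k. 2 ^ k)"
proof -
  have "recursive_on 2 (\<lambda>zs. zs ! 1 + zs ! 1)"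
    by (intro recursive_on_add recursive_on_proj) simp_all
  then have r: "recursive_on 1 (prec (\<lambda>_. 1) (\<lambda>zs. zs ! 1 + zs ! 1))"
    by (intro recursive_on_prec1 recursive_on_const)
  have e: "rec_nat (Suc 0) (\<lambda>k acc. acc + acc) y = (2::nat) ^ y" for y
    by (induction y) auto
  show ?thesis
    unfolding recursive_fn_iff_recursive_on
    by (rule recursive_on_cong[OF r]) (auto simp: e prec_Cons length_Suc_conv)
qed

lemma recursive_fn_mod2: "recursive_fn (\<lambda>k. k mod 2)"
proof -
  have "recursive_on 2 (\<lambda>zs. 1 - zs ! 1)"
    by (intro recursive_on_diff recursive_on_const recursive_on_proj) simp
  then have r: "recursive_on 1 (prec (\<lambda>_. 0) (\<lambda>zs. 1 - zs ! 1))"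
    by (intro recursive_on_prec1 recursive_on_const)
  have e: "rec_nat 0 (\<lambda>k acc. Suc 0 - acc) y = y mod 2" for y :: nat
    by (induction y) (auto simp: mod_Suc)
  show ?thesis
    unfolding recursive_fn_iff_recursive_on
    by (rule recursive_on_cong[OF r]) (auto simp: e prec_Cons length_Suc_conv)
qed

lemma less_square_Suc_mult:
  fixes W D :: nat
  assumes "0 < D"
  shows "W < D * ((W + 1) * (W + 1))"
proof -
  have "W < (W + 1) * (W + 1)"
    by simp
  also have "\<dots> \<le> D * ((W + 1) * (W + 1))"
    using assms by (metis Suc_leI mult_le_mono1 mult_1 One_nat_def)
  finally show ?thesis .
qed

lemma Least_square_gt_bounds:
  fixes W D :: nat
  assumes "0 < D"
  defines "n \<equiv> LEAST n. W < D * ((n + 1) * (n + 1))"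
  shows "D * (n * n) \<le> W" and "W < D * ((n + 1) * (n + 1))"
proof -
  show "W < D * ((n + 1) * (n + 1))"
    unfolding n_def by (rule LeastI) (rule less_square_Suc_mult[OF assms(1)])
  show "D * (n * n) \<le> W"
  proof (cases n)
    case (Suc m)
    then have "\<not> W < D * ((m + 1) * (m + 1))"
      using not_less_Least[of m "\<lambda>n. W < D * ((n + 1) * (n + 1))"] unfolding n_def by auto
    then show ?thesis
      using Suc by simp
  qed simp
qed

lemma recursive_fn_Least_square_gt:
  assumes "recursive_fn D" "recursive_fn W" "\<And>k. 0 < D k"
  shows "recursive_fn (\<lambda>k. LEAST n. W k < D k * ((n + 1) * (n + 1)))"
proof -
  let ?g = "\<lambda>xs::nat list. 1 - (D (xs ! 1) * ((xs ! 0 + 1) * (xs ! 0 + 1)) - W (xs ! 1))"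
  have "recursive_on 2 ?g"
    by (intro recursive_on_diff recursive_on_const recursive_on_mult recursive_on_add
        recursive_fn_compose[OF assms(1)] recursive_fn_compose[OF assms(2)] recursive_on_proj) simp_all
  then have r: "recursive_on 1 (\<lambda>xs. LEAST y. ?g (y # xs) = 0)"
  proof (rule recursive_on_Least[where n = 1, unfolded Suc_1])
    fix xs :: "nat list"
    assume "length xs = 1"
    then obtain k where xs: "xs = [k]"
      by (cases xs) auto
    show "\<exists>y. ?g (y # xs) = 0"
      using less_square_Suc_mult[where W = "W k" and D = "D k", OF assms(3)]
      by (intro exI[of _ "W k"]) (simp add: xs)
  qed
  have e: "?g [y, k] = 0 \<longleftrightarrow> W k < D k * ((y + 1) * (y + 1))" for y k
    by auto
  show ?thesis
    unfolding recursive_fn_iff_recursive_on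
  proof (rule recursive_on_cong[OF r])
    fix xs :: "nat list"
    assume "length xs = 1"
    then obtain k where xs: "xs = [k]"
      by (cases xs) auto
    show "(LEAST y. ?g (y # xs) = 0) = (LEAST n. W (hd xs) < D (hd xs) * ((n + 1) * (n + 1)))"
      unfolding xs e list.sel(1) ..
  qed
qed

section \<open>Computable real numbers\<close>

text \<open>A sign-free encoding of the approximating rationals: the difference of two naturals
  over a positive natural.\<close>

definition diff_quot :: "(nat \<Rightarrow> nat) \<Rightarrow> (nat \<Rightarrow> nat) \<Rightarrow> (nat \<Rightarrow> nat) \<Rightarrow> nat \<Rightarrow> real" where
  "diff_quot p q d k = (real (p k) - real (q k)) / real (d k)"

definition recursive_approx ::
    "(nat \<Rightarrow> nat) \<Rightarrow> (nat \<Rightarrow> nat) \<Rightarrow> (nat \<Rightarrow> nat) \<Rightarrow> real \<Rightarrow> bool" where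
  "recursive_approx p q d x \<longleftrightarrow> recursive_fn p \<and> recursive_fn q \<and> recursive_fn d \<and>
     (\<forall>k. 0 < d k) \<and> (\<forall>k. \<bar>diff_quot p q d k - x\<bar> \<le> 1 / 2 ^ k)"

lemma computable_real_iff_recursive_approx:
  "computable_real x \<longleftrightarrow> (\<exists>p q d. recursive_approx p q d x)"
proof
  assume "computable_real x"
  then obtain a b s where abs: "recursive_fn a" "recursive_fn b" "recursive_fn s"
    "\<And>k. b k \<noteq> 0 \<and> \<bar>(-1) ^ (s k) * real (a k) / real (b k) - x\<bar> \<le> 1 / 2 ^ k"
    unfolding computable_real_def by blast
  let ?p = "\<lambda>k. a k * (1 - s k mod 2)" and ?q = "\<lambda>k. a k * (s k mod 2)"
  have "recursive_fn ?p" "recursive_fn ?q"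
    using abs(1,3)
    by (intro recursive_fn_mult recursive_fn_diff recursive_fn_const
        recursive_fn_comp[OF recursive_fn_mod2]; simp)+
  moreover have "diff_quot ?p ?q b k = (-1) ^ (s k) * real (a k) / real (b k)" for k
    unfolding diff_quot_def by (cases "even (s k)") (auto simp: odd_iff_mod_2_eq_one)
  ultimately have "recursive_approx ?p ?q b x"
    unfolding recursive_approx_def using abs by auto
  then show "\<exists>p q d. recursive_approx p q d x"
    by blast
next
  assume "\<exists>p q d. recursive_approx p q d x"
  then obtain p q d where pqd: "recursive_fn p" "recursive_fn q" "recursive_fn d" "\<And>k. 0 < d k"
    "\<And>k. \<bar>diff_quot p q d k - x\<bar> \<le> 1 / 2 ^ k"
    unfolding recursive_approx_def by blast
  \<comment> \<open>in truncated subtraction, \<open>?a k = |p k - q k|\<close> and \<open>?s k = 1\<close> iff \<open>p k < q k\<close>\<close>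
  let ?a = "\<lambda>k. (p k - q k) + (q k - p k)" and ?s = "\<lambda>k. 1 - (1 - (q k - p k))"
  have "recursive_fn ?a" "recursive_fn ?s"
    using pqd by (intro recursive_fn_add recursive_fn_diff recursive_fn_const; simp)+
  moreover have "(-1) ^ (?s k) * real (?a k) / real (d k) = diff_quot p q d k" for k
    unfolding diff_quot_def by (cases "p k < q k"; cases "q k < p k") (auto simp: of_nat_diff)
  ultimately show "computable_real x"
    unfolding computable_real_def using pqd
    by (intro exI[of _ ?a] exI[of _ d] exI[of _ ?s]) auto
qed

lemma computable_real_of_nat: "computable_real (real n)"
  unfolding computable_real_iff_recursive_approx recursive_approx_def diff_quot_def
  by (intro exI[of _ "\<lambda>_. n"] exI[of _ "\<lambda>_. 0"] exI[of _ "\<lambda>_. 1"]) (auto simp: recursive_fn_const)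

lemma computable_real_uminus:
  assumes "computable_real x"
  shows "computable_real (- x)"
proof -
  obtain p q d where "recursive_approx p q d x"
    using assms unfolding computable_real_iff_recursive_approx by blast
  moreover have "diff_quot q p d k = - diff_quot p q d k" for k
    unfolding diff_quot_def by (metis minus_diff_eq minus_divide_left)
  ultimately have "recursive_approx q p d (- x)"
    unfolding recursive_approx_def by (simp add: abs_minus_commute)
  then show ?thesis
    unfolding computable_real_iff_recursive_approx by blast
qed

lemma computable_real_add:
  assumes "computable_real x" "computable_real y"
  shows "computable_real (x + y)"
proof -
  obtain p1 q1 d1 where h1: "recursive_fn p1" "recursive_fn q1" "recursive_fn d1" "\<And>k. 0 < d1 k"
    "\<And>k. \<bar>diff_quot p1 q1 d1 k - x\<bar> \<le> 1 / 2 ^ k"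
    using assms(1) unfolding computable_real_iff_recursive_approx recursive_approx_def by blast
  obtain p2 q2 d2 where h2: "recursive_fn p2" "recursive_fn q2" "recursive_fn d2" "\<And>k. 0 < d2 k"
    "\<And>k. \<bar>diff_quot p2 q2 d2 k - y\<bar> \<le> 1 / 2 ^ k"
    using assms(2) unfolding computable_real_iff_recursive_approx recursive_approx_def by blast
  let ?p = "\<lambda>k. p1 (k + 1) * d2 (k + 1) + p2 (k + 1) * d1 (k + 1)"
  let ?q = "\<lambda>k. q1 (k + 1) * d2 (k + 1) + q2 (k + 1) * d1 (k + 1)"
  let ?d = "\<lambda>k. d1 (k + 1) * d2 (k + 1)"
  have "recursive_fn ?p" "recursive_fn ?q" "recursive_fn ?d"
    using h1 h2 by (intro recursive_fn_add recursive_fn_mult recursive_fn_shift; simp)+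
  moreover have "\<bar>diff_quot ?p ?q ?d k - (x + y)\<bar> \<le> 1 / 2 ^ k" for k
  proof -
    have "diff_quot ?p ?q ?d k = diff_quot p1 q1 d1 (k + 1) + diff_quot p2 q2 d2 (k + 1)"
      using h1(4)[of "k + 1"] h2(4)[of "k + 1"] unfolding diff_quot_def by (simp add: field_simps)
    then have "\<bar>diff_quot ?p ?q ?d k - (x + y)\<bar>
        \<le> \<bar>diff_quot p1 q1 d1 (k + 1) - x\<bar> + \<bar>diff_quot p2 q2 d2 (k + 1) - y\<bar>"
      by linarith
    also have "\<dots> \<le> 1 / 2 ^ (k + 1) + 1 / 2 ^ (k + 1)"
      using h1(5) h2(5) by (rule add_mono)
    finally show ?thesis
      by simp
  qed
  ultimately have "recursive_approx ?p ?q ?d (x + y)"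
    unfolding recursive_approx_def using h1(4) h2(4) by auto
  then show ?thesis
    unfolding computable_real_iff_recursive_approx by blast
qed

lemma abs_mult_diff_le:
  fixes x y r s e B :: real
  assumes "\<bar>r - x\<bar> \<le> e" "\<bar>s - y\<bar> \<le> e" "e \<le> 1" "\<bar>x\<bar> \<le> B" "\<bar>y\<bar> \<le> B"
  shows "\<bar>r * s - x * y\<bar> \<le> (2 * B + 1) * e"
proof -
  have "\<bar>r\<bar> \<le> B + 1"
    using assms(1,3,4) by linarith
  have "\<bar>r * s - x * y\<bar> = \<bar>r * (s - y) + (r - x) * y\<bar>"
    by (simp add: algebra_simps)
  also have "\<dots> \<le> \<bar>r\<bar> * \<bar>s - y\<bar> + \<bar>r - x\<bar> * \<bar>y\<bar>"
    by (metis abs_mult abs_triangle_ineq)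
  also have "\<dots> \<le> (B + 1) * e + e * B"
    using assms \<open>\<bar>r\<bar> \<le> B + 1\<close> by (intro add_mono mult_mono) auto
  also have "\<dots> = (2 * B + 1) * e"
    by (simp add: algebra_simps)
  finally show ?thesis .
qed

lemma computable_real_mult:
  assumes "computable_real x" "computable_real y"
  shows "computable_real (x * y)"
proof -
  obtain p1 q1 d1 where h1: "recursive_fn p1" "recursive_fn q1" "recursive_fn d1" "\<And>k. 0 < d1 k"
    "\<And>k. \<bar>diff_quot p1 q1 d1 k - x\<bar> \<le> 1 / 2 ^ k"
    using assms(1) unfolding computable_real_iff_recursive_approx recursive_approx_def by blast
  obtain p2 q2 d2 where h2: "recursive_fn p2" "recursive_fn q2" "recursive_fn d2" "\<And>k. 0 < d2 k"
    "\<And>k. \<bar>diff_quot p2 q2 d2 k - y\<bar> \<le> 1 / 2 ^ k"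
    using assms(2) unfolding computable_real_iff_recursive_approx recursive_approx_def by blast
  obtain c where c: "max \<bar>x\<bar> \<bar>y\<bar> < 2 ^ c"
    using real_arch_pow[of 2 "max \<bar>x\<bar> \<bar>y\<bar>"] by auto
  let ?j = "\<lambda>k. k + (c + 2)"
  let ?p = "\<lambda>k. p1 (?j k) * p2 (?j k) + q1 (?j k) * q2 (?j k)"
  let ?q = "\<lambda>k. p1 (?j k) * q2 (?j k) + q1 (?j k) * p2 (?j k)"
  let ?d = "\<lambda>k. d1 (?j k) * d2 (?j k)"
  have "recursive_fn ?p" "recursive_fn ?q" "recursive_fn ?d"
    using h1 h2 by (intro recursive_fn_add recursive_fn_mult recursive_fn_shift; simp)+
  moreover have "\<bar>diff_quot ?p ?q ?d k - x * y\<bar> \<le> 1 / 2 ^ k" for k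
  proof -
    have "diff_quot ?p ?q ?d k = diff_quot p1 q1 d1 (?j k) * diff_quot p2 q2 d2 (?j k)"
      using h1(4)[of "?j k"] h2(4)[of "?j k"] unfolding diff_quot_def by (simp add: field_simps)
    moreover have "\<bar>diff_quot p1 q1 d1 (?j k) * diff_quot p2 q2 d2 (?j k) - x * y\<bar>
        \<le> (2 * 2 ^ c + 1) * (1 / 2 ^ ?j k)"
      using c one_le_power[of "2::real" "?j k"] by (intro abs_mult_diff_le h1(5) h2(5)) auto
    moreover have "(2 * 2 ^ c + 1) * (1 / 2 ^ ?j k) \<le> (4 * 2 ^ c) * (1 / 2 ^ ?j k :: real)"
      using one_le_power[of "2::real" c] by (intro mult_right_mono) (linarith, simp)
    moreover have "(4 * 2 ^ c) * (1 / 2 ^ ?j k) = (1 / 2 ^ k :: real)"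
      by (simp add: power_add)
    ultimately show ?thesis
      by linarith
  qed
  ultimately have "recursive_approx ?p ?q ?d (x * y)"
    unfolding recursive_approx_def using h1(4) h2(4) by auto
  then show ?thesis
    unfolding computable_real_iff_recursive_approx by blast
qed

lemma abs_inverse_diff_le:
  fixes x r m e :: real
  assumes "0 < m" "m \<le> 1" "m \<le> \<bar>x\<bar>" "\<bar>r - x\<bar> \<le> e * m\<^sup>2 / 2" "e \<le> 1"
  shows "m / 2 \<le> \<bar>r\<bar>" and "\<bar>inverse r - inverse x\<bar> \<le> e"
proof -
  have "e * m\<^sup>2 \<le> 1 * m\<^sup>2"
    using assms(5) by (rule mult_right_mono) simp
  also have "\<dots> \<le> m"
    using assms(1,2) by (simp add: power2_eq_square mult_left_le_one_le)
  finally have "e * m\<^sup>2 \<le> m" .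
  then show r: "m / 2 \<le> \<bar>r\<bar>"
    using assms(3,4) by linarith
  have "x \<noteq> 0" "r \<noteq> 0"
    using assms(1,3) r by auto
  then have "\<bar>inverse r - inverse x\<bar> = \<bar>x - r\<bar> / (\<bar>r\<bar> * \<bar>x\<bar>)"
    by (simp add: field_simps abs_mult)
  also have "\<dots> \<le> (e * m\<^sup>2 / 2) / ((m / 2) * m)"
    using assms r order_trans[OF abs_ge_zero assms(4)]
    by (intro frac_le mult_mono) (auto simp: abs_minus_commute)
  also have "\<dots> = e"
    using assms(1) by (simp add: power2_eq_square)
  finally show "\<bar>inverse r - inverse x\<bar> \<le> e" .
qed

lemma diff_quot_inverse:
  assumes "p k \<noteq> q k" "0 < d k"
  shows "diff_quot (\<lambda>k. d k * (1 - (1 - (p k - q k)))) (\<lambda>k. d k * (1 - (1 - (q k - p k))))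
      (\<lambda>k. (p k - q k) + (q k - p k)) k = inverse (diff_quot p q d k)"
  using assms unfolding diff_quot_def
  by (cases "p k < q k") (auto simp: of_nat_diff field_simps)

lemma computable_real_inverse:
  assumes "computable_real x"
  shows "computable_real (inverse x)"
proof (cases "x = 0")
  case True
  then show ?thesis
    using computable_real_of_nat[of 0] by simp
next
  case False
  obtain p q d where h: "recursive_fn p" "recursive_fn q" "recursive_fn d" "\<And>k. 0 < d k"
    "\<And>k. \<bar>diff_quot p q d k - x\<bar> \<le> 1 / 2 ^ k"
    using assms unfolding computable_real_iff_recursive_approx recursive_approx_def by blast
  obtain c where c: "1 / \<bar>x\<bar> < 2 ^ c"
    using real_arch_pow[of 2 "1 / \<bar>x\<bar>"] by auto
  define m :: real where "m = 1 / 2 ^ c"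
  have m: "0 < m" "m \<le> 1" "m \<le> \<bar>x\<bar>"
    using c False unfolding m_def by (auto simp: field_simps)
  let ?j = "\<lambda>k. k + (2 * c + 1)"
  have approx: "m / 2 \<le> \<bar>diff_quot p q d (?j k)\<bar>"
    "\<bar>inverse (diff_quot p q d (?j k)) - inverse x\<bar> \<le> 1 / 2 ^ k" for k
  proof -
    have "(1::real) / 2 ^ ?j k = (1 / 2 ^ k) * m\<^sup>2 / 2"
      unfolding m_def by (simp add: power_add power_mult power2_eq_square field_simps)
    then have "\<bar>diff_quot p q d (?j k) - x\<bar> \<le> (1 / 2 ^ k) * m\<^sup>2 / 2"
      using h(5)[of "?j k"] by simp
    from abs_inverse_diff_le[OF m this]
    show "m / 2 \<le> \<bar>diff_quot p q d (?j k)\<bar>"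
      "\<bar>inverse (diff_quot p q d (?j k)) - inverse x\<bar> \<le> 1 / 2 ^ k"
      by simp_all
  qed
  let ?P = "\<lambda>k. p (?j k)" and ?Q = "\<lambda>k. q (?j k)" and ?D = "\<lambda>k. d (?j k)"
  let ?p = "\<lambda>k. ?D k * (1 - (1 - (?P k - ?Q k)))"
  let ?q = "\<lambda>k. ?D k * (1 - (1 - (?Q k - ?P k)))"
  let ?d = "\<lambda>k. (?P k - ?Q k) + (?Q k - ?P k)"
  have PQ: "?P k \<noteq> ?Q k" for k
    using approx(1)[of k] m(1) unfolding diff_quot_def by auto
  have "recursive_fn ?p" "recursive_fn ?q" "recursive_fn ?d"
    using h by (intro recursive_fn_add recursive_fn_mult recursive_fn_diff recursive_fn_const
        recursive_fn_shift; simp)+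
  moreover have "0 < ?d k" for k
    using PQ[of k] by (metis add_gr_0 linorder_neqE_nat zero_less_diff)
  moreover have "diff_quot ?p ?q ?d k = inverse (diff_quot p q d (?j k))" for k
    using diff_quot_inverse[of ?P k ?Q ?D] PQ h(4) by (simp add: diff_quot_def)
  ultimately have "recursive_approx ?p ?q ?d (inverse x)"
    unfolding recursive_approx_def using approx(2) by auto
  then show ?thesis
    unfolding computable_real_iff_recursive_approx by blast
qed

lemma abs_sqrt_diff_le:
  fixes a b :: real
  assumes "0 \<le> a" "0 \<le> b"
  shows "\<bar>sqrt a - sqrt b\<bar> \<le> sqrt \<bar>a - b\<bar>"
proof -
  have *: "sqrt u - sqrt v \<le> sqrt \<bar>u - v\<bar>" if "0 \<le> v" "v \<le> u" for u v :: real
  proof -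
    have "sqrt u = sqrt (v + (u - v))"
      by simp
    also have "\<dots> \<le> sqrt v + sqrt (u - v)"
      using that by (intro sqrt_add_le_add_sqrt) auto
    finally show ?thesis
      using that by simp
  qed
  show ?thesis
    using *[of b a] *[of a b] assms real_sqrt_le_mono[of b a] real_sqrt_le_mono[of a b]
    by (cases "b \<le> a") (auto simp: abs_minus_commute)
qed

lemma abs_sqrt_diff_le_of_square_bounds:
  fixes t N :: real and n :: nat
  assumes "0 < N" "real n * real n \<le> t * (N * N)" "t * (N * N) < (real n + 1) * (real n + 1)"
  shows "\<bar>real n / N - sqrt t\<bar> \<le> 1 / N"
proof -
  have "0 \<le> t * (N * N)"
    using assms(2) by (meson order_trans mult_nonneg_nonneg of_nat_0_le_iff)
  then have "0 \<le> t"
    by (metis assms(1) mult_pos_pos not_le zero_le_mult_iff)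
  have sqrt_tNN: "sqrt (t * (N * N)) = sqrt t * N"
    using assms(1) by (simp add: real_sqrt_mult)
  have "real n \<le> sqrt t * N"
    using real_sqrt_le_mono[OF assms(2)] sqrt_tNN by simp
  moreover have "sqrt t * N < real n + 1"
    using real_sqrt_less_mono[OF assms(3)] sqrt_tNN by simp
  ultimately have "\<bar>real n - sqrt t * N\<bar> / N \<le> 1 / N"
    using assms(1) by (intro divide_right_mono) auto
  moreover have "real n / N - sqrt t = (real n - sqrt t * N) / N"
    using assms(1) by (simp add: field_simps)
  ultimately show ?thesis
    using assms(1) by (simp add: abs_divide)
qed

lemma Least_square_gt_real_bounds:
  fixes W D :: nat
  assumes "0 < D"
  defines "n \<equiv> LEAST n. W < D * ((n + 1) * (n + 1))"
  shows "real n * real n \<le> real W / real D" and "real W / real D < (real n + 1) * (real n + 1)"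
proof -
  have "real (D * (n * n)) \<le> real W"
    using Least_square_gt_bounds(1)[OF assms(1)] unfolding n_def of_nat_le_iff .
  then show "real n * real n \<le> real W / real D"
    using assms(1) by (simp add: field_simps)
  have "real W < real (D * ((n + 1) * (n + 1)))"
    using Least_square_gt_bounds(2)[OF assms(1)] unfolding n_def of_nat_less_iff .
  then show "real W / real D < (real n + 1) * (real n + 1)"
    using assms(1) by (simp add: field_simps)
qed

lemma abs_Least_square_gt_sqrt_diff_le:
  fixes P Q D k :: nat and y :: real
  assumes "0 < D" "0 \<le> y" "\<bar>(real P - real Q) / real D - y\<bar> \<le> 1 / 2 ^ (2 * k + 2)"
  defines "n \<equiv> LEAST n. (P - Q) * (2 ^ (k + 1) * 2 ^ (k + 1)) < D * ((n + 1) * (n + 1))"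
  shows "\<bar>real n / 2 ^ (k + 1) - sqrt y\<bar> \<le> 1 / 2 ^ k"
proof -
  define t :: real where "t = real (P - Q) / real D"
  define N :: real where "N = 2 ^ (k + 1)"
  have W: "real ((P - Q) * (2 ^ (k + 1) * 2 ^ (k + 1))) / real D = t * (N * N)"
    unfolding t_def N_def by simp
  note bounds = Least_square_gt_real_bounds[OF assms(1), of "(P - Q) * (2 ^ (k + 1) * 2 ^ (k + 1))",
      folded n_def, unfolded W]
  then have "\<bar>real n / N - sqrt t\<bar> \<le> 1 / N"
    by (intro abs_sqrt_diff_le_of_square_bounds) (simp_all add: N_def)
  \<comment> \<open>truncated subtraction replaces a negative approximation of \<open>y \<ge> 0\<close> by the better one \<open>0\<close>\<close>
  have "\<bar>t - y\<bar> \<le> 1 / 2 ^ (2 * k + 2)"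
  proof (cases "Q \<le> P")
    case True
    then show ?thesis
      using assms(3) unfolding t_def by (simp add: of_nat_diff)
  next
    case False
    then have "t = 0" "(real P - real Q) / real D \<le> 0"
      unfolding t_def by (auto simp: divide_nonpos_nonneg)
    then show ?thesis
      using assms(2,3) by linarith
  qed
  also have "1 / 2 ^ (2 * k + 2) = (1 / N)\<^sup>2"
    unfolding N_def by (simp add: power_divide power_mult[symmetric] mult.commute)
  finally have "sqrt \<bar>t - y\<bar> \<le> sqrt ((1 / N)\<^sup>2)"
    by (rule real_sqrt_le_mono)
  then have "\<bar>sqrt t - sqrt y\<bar> \<le> 1 / N"
    using abs_sqrt_diff_le[OF _ assms(2), of t] unfolding t_def N_def by simp
  moreover have "1 / N + 1 / N = 1 / 2 ^ k"
    unfolding N_def by simp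
  ultimately show ?thesis
    using \<open>\<bar>real n / N - sqrt t\<bar> \<le> 1 / N\<close> unfolding N_def by linarith
qed

lemma computable_real_sqrt_nonneg:
  assumes "computable_real y" "0 \<le> y"
  shows "computable_real (sqrt y)"
proof -
  obtain p q d where h: "recursive_fn p" "recursive_fn q" "recursive_fn d" "\<And>k. 0 < d k"
    "\<And>k. \<bar>diff_quot p q d k - y\<bar> \<le> 1 / 2 ^ k"
    using assms(1) unfolding computable_real_iff_recursive_approx recursive_approx_def by blast
  let ?j = "\<lambda>k. 2 * k + 2"
  let ?N = "\<lambda>k. (2::nat) ^ (k + 1)"
  let ?n = "\<lambda>k. LEAST n. (p (?j k) - q (?j k)) * (?N k * ?N k) < d (?j k) * ((n + 1) * (n + 1))"
  have j: "recursive_fn ?j"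
    by (intro recursive_fn_add recursive_fn_mult recursive_fn_const recursive_fn_id)
  have "recursive_fn ?N"
    by (rule recursive_fn_shift[OF recursive_fn_power2])
  moreover have "recursive_fn ?n"
    using h(4) recursive_fn_comp[OF h(1) j] recursive_fn_comp[OF h(2) j]
      recursive_fn_comp[OF h(3) j] \<open>recursive_fn ?N\<close>
    by (intro recursive_fn_Least_square_gt recursive_fn_mult recursive_fn_diff) simp_all
  moreover have "\<bar>diff_quot ?n (\<lambda>_. 0) ?N k - sqrt y\<bar> \<le> 1 / 2 ^ k" for k
    using abs_Least_square_gt_sqrt_diff_le[OF h(4) assms(2) h(5)[of "?j k", unfolded diff_quot_def]]
    unfolding diff_quot_def by simp
  ultimately have "recursive_approx ?n (\<lambda>_. 0) ?N (sqrt y)"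
    unfolding recursive_approx_def by (auto simp: recursive_fn_const)
  then show ?thesis
    unfolding computable_real_iff_recursive_approx by blast
qed

lemma computable_real_sqrt:
  assumes "computable_real y"
  shows "computable_real (sqrt y)"
proof (cases "0 \<le> y")
  case True
  then show ?thesis
    using computable_real_sqrt_nonneg assms by blast
next
  case False
  then have "sqrt y = - sqrt (- y)"
    by (simp add: real_sqrt_minus)
  then show ?thesis
    using False assms computable_real_sqrt_nonneg computable_real_uminus by auto
qed

lemma computable_real_zero: "computable_real 0"
  using computable_real_of_nat[of 0] by simp

lemma computable_real_one: "computable_real 1"
  using computable_real_of_nat[of 1] by simp

lemma computable_real_diff:
  "computable_real x \<Longrightarrow> computable_real y \<Longrightarrow> computable_real (x - y)"
  using computable_real_add[of x "- y"] computable_real_uminus[of y] by simp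

lemma computable_real_divide:
  "computable_real x \<Longrightarrow> computable_real y \<Longrightarrow> computable_real (x / y)"
  using computable_real_mult[of x "inverse y"] computable_real_inverse[of y]
  by (simp add: divide_inverse)

lemma computable_real_power2: "computable_real x \<Longrightarrow> computable_real (x\<^sup>2)"
  using computable_real_mult[of x x] by (simp add: power2_eq_square)

lemma computable_real_sum:
  "(\<And>i. i \<in> S \<Longrightarrow> computable_real (f i)) \<Longrightarrow> computable_real (\<Sum>i\<in>S. f i)"
  by (induction S rule: infinite_finite_induct)
    (simp_all add: computable_real_zero computable_real_add)

section \<open>Computable complex numbers\<close>

lemma computable_complex_zero: "computable_complex 0"
  by (simp add: computable_complex_def computable_real_zero)

lemma computable_complex_add:
  "computable_complex x \<Longrightarrow> computable_complex y \<Longrightarrow> computable_complex (x + y)"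
  by (simp add: computable_complex_def computable_real_add)

lemma computable_complex_uminus: "computable_complex x \<Longrightarrow> computable_complex (- x)"
  by (simp add: computable_complex_def computable_real_uminus)

lemma computable_complex_diff:
  "computable_complex x \<Longrightarrow> computable_complex y \<Longrightarrow> computable_complex (x - y)"
  by (simp add: computable_complex_def computable_real_diff)

lemma computable_complex_mult:
  "computable_complex x \<Longrightarrow> computable_complex y \<Longrightarrow> computable_complex (x * y)"
  by (simp add: computable_complex_def computable_real_diff computable_real_add computable_real_mult)

lemma computable_complex_cnj: "computable_complex x \<Longrightarrow> computable_complex (cnj x)"
  by (simp add: computable_complex_def computable_real_uminus)

lemma computable_complex_inverse: "computable_complex x \<Longrightarrow> computable_complex (inverse x)"
  by (simp add: computable_complex_def computable_real_uminus computable_real_divide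
      computable_real_add computable_real_power2)

lemma computable_complex_divide:
  "computable_complex x \<Longrightarrow> computable_complex y \<Longrightarrow> computable_complex (x / y)"
  using computable_complex_mult[of x "inverse y"] computable_complex_inverse[of y]
  by (simp add: divide_inverse)

lemma computable_complex_sum:
  "(\<And>i. i \<in> S \<Longrightarrow> computable_complex (f i)) \<Longrightarrow> computable_complex (\<Sum>i\<in>S. f i)"
  by (induction S rule: infinite_finite_induct)
    (simp_all add: computable_complex_zero computable_complex_add)

lemma computable_real_cmod: "computable_complex z \<Longrightarrow> computable_real (cmod z)"
  unfolding cmod_def computable_complex_def
  by (intro computable_real_sqrt computable_real_add computable_real_power2) simp_all

text \<open>The computable complex numbers form a field, so linear algebra over it produces
  matrices with computable entries.\<close>

typedef ccomplex = "{z::complex. computable_complex z}"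
  morphisms complex_of_ccomplex ccomplex_of_complex
  using computable_complex_zero by blast

setup_lifting type_definition_ccomplex

instantiation ccomplex :: field
begin

lift_definition zero_ccomplex :: ccomplex is 0
  by (rule computable_complex_zero)

lift_definition one_ccomplex :: ccomplex is 1
  by (simp add: computable_complex_def computable_real_zero computable_real_one)

lift_definition plus_ccomplex :: "ccomplex \<Rightarrow> ccomplex \<Rightarrow> ccomplex" is "(+)"
  by (rule computable_complex_add)

lift_definition minus_ccomplex :: "ccomplex \<Rightarrow> ccomplex \<Rightarrow> ccomplex" is "(-)"
  by (rule computable_complex_diff)

lift_definition uminus_ccomplex :: "ccomplex \<Rightarrow> ccomplex" is uminus
  by (rule computable_complex_uminus)

lift_definition times_ccomplex :: "ccomplex \<Rightarrow> ccomplex \<Rightarrow> ccomplex" is "(*)"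
  by (rule computable_complex_mult)

lift_definition inverse_ccomplex :: "ccomplex \<Rightarrow> ccomplex" is inverse
  by (rule computable_complex_inverse)

lift_definition divide_ccomplex :: "ccomplex \<Rightarrow> ccomplex \<Rightarrow> ccomplex" is "(/)"
  by (rule computable_complex_divide)

instance
  by standard (transfer; simp add: algebra_simps divide_inverse)+

end

lemma complex_of_ccomplex_sum:
  "complex_of_ccomplex (\<Sum>i\<in>S. f i) = (\<Sum>i\<in>S. complex_of_ccomplex (f i))"
proof (induction S rule: infinite_finite_induct)
  case (insert x F)
  then show ?case
    by (simp add: plus_ccomplex.rep_eq)
qed (simp_all add: zero_ccomplex.rep_eq)

definition complex_matrix_of :: "ccomplex ^ 'n ^ 'm \<Rightarrow> complex ^ 'n ^ 'm" where
  "complex_matrix_of M = (\<chi> i j. complex_of_ccomplex (M $ i $ j))"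

lemma complex_matrix_of_mult:
  "complex_matrix_of (M ** N) = complex_matrix_of M ** complex_matrix_of N"
  by (simp add: complex_matrix_of_def matrix_matrix_mult_def vec_eq_iff complex_of_ccomplex_sum
      times_ccomplex.rep_eq)

lemma computable_mat_complex_matrix_of: "computable_mat (complex_matrix_of M)"
  using complex_of_ccomplex by (simp add: computable_mat_def complex_matrix_of_def)

lemma exists_generalized_inverse:
  fixes C :: "'a::field ^ 'm ^ 'n"
  shows "\<exists>G. C ** G ** C = C"
proof -
  obtain g where g: "Vector_Spaces.linear (*s) (*s) g" "\<forall>v\<in>range ((*v) C). C *v (g v) = v"
    using vec.linear_exists_right_inverse_on[OF matrix_vector_mul_linear_gen vec.subspace_UNIV, of C]
    by auto
  have "C ** matrix g ** C = C"
    by (simp add: matrix_eq matrix_vector_mul_assoc[symmetric] matrix_works[OF g(1)] g(2))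
  then show ?thesis ..
qed

lemma exists_computable_generalized_inverse:
  fixes C :: "complex ^ 'm ^ 'n"
  assumes "computable_mat C"
  shows "\<exists>G. computable_mat G \<and> C ** G ** C = C"
proof -
  define C' :: "ccomplex ^ 'm ^ 'n" where "C' = (\<chi> i j. ccomplex_of_complex (C $ i $ j))"
  have C: "complex_matrix_of C' = C"
    using assms unfolding complex_matrix_of_def C'_def computable_mat_def
    by (simp add: vec_eq_iff ccomplex_of_complex_inverse)
  obtain G' where "C' ** G' ** C' = C'"
    using exists_generalized_inverse by blast
  then have "C ** complex_matrix_of G' ** C = C"
    unfolding C[symmetric] complex_matrix_of_mult[symmetric] by simp
  then show ?thesis
    using computable_mat_complex_matrix_of by blast
qed

section \<open>The Moore--Penrose inverse\<close>

notation conj_transpose ("_\<^sup>H" [1000] 1000)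

lemma conj_transpose_conj_transpose [simp]: "A\<^sup>H\<^sup>H = A"
  by (simp add: conj_transpose_def vec_eq_iff)

lemma conj_transpose_mult: "(A ** B)\<^sup>H = B\<^sup>H ** A\<^sup>H"
  by (simp add: conj_transpose_def matrix_matrix_mult_def vec_eq_iff mult.commute)

lemma matrix_diff_ldistrib: "(A::'a::ring_1 ^ 'n ^ 'm) ** (B - C) = A ** B - A ** C"
  by (simp add: matrix_matrix_mult_def vec_eq_iff sum_subtractf algebra_simps)

lemma conj_transpose_mult_self_eq_0:
  fixes N :: "complex ^ 'n ^ 'm"
  assumes "N\<^sup>H ** N = 0"
  shows "N = 0"
proof -
  have "N $ i $ j = 0" for i j
  proof -
    have "(N\<^sup>H ** N) $ j $ j = 0"
      using assms by simp
    then have "Re (\<Sum>k\<in>UNIV. cnj (N $ k $ j) * N $ k $ j) = 0"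
      by (simp add: matrix_matrix_mult_def conj_transpose_def)
    moreover have "(cmod z)\<^sup>2 = Re (cnj z * z)" for z :: complex
      unfolding cmod_power2 by (simp add: power2_eq_square)
    ultimately have "(\<Sum>k\<in>UNIV. (cmod (N $ k $ j))\<^sup>2) = 0"
      by (simp only: Re_sum)
    then show ?thesis
      by (simp add: sum_nonneg_eq_0_iff)
  qed
  then show ?thesis
    by (simp add: vec_eq_iff)
qed

lemma gram_cancel_left:
  fixes A :: "complex ^ 'n ^ 'm"
  assumes "A\<^sup>H ** A ** M1 = A\<^sup>H ** A ** M2"
  shows "A ** M1 = A ** M2"
proof -
  let ?N = "A ** (M1 - M2)"
  have "A\<^sup>H ** A ** (M1 - M2) = 0"
    using assms by (simp add: matrix_diff_ldistrib)
  moreover have "?N\<^sup>H ** ?N = (M1 - M2)\<^sup>H ** (A\<^sup>H ** A ** (M1 - M2))"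
    by (simp only: conj_transpose_mult matrix_mul_assoc)
  ultimately have "?N\<^sup>H ** ?N = 0"
    by (simp add: matrix_matrix_mult_def vec_eq_iff)
  then have "A ** M1 - A ** M2 = 0"
    unfolding matrix_diff_ldistrib[symmetric] by (rule conj_transpose_mult_self_eq_0)
  then show ?thesis
    by simp
qed

lemma gram_cancel_right:
  fixes A :: "complex ^ 'n ^ 'm"
  assumes "M1 ** A ** A\<^sup>H = M2 ** A ** A\<^sup>H"
  shows "M1 ** A = M2 ** A"
proof -
  have "A\<^sup>H\<^sup>H ** A\<^sup>H ** M1\<^sup>H = A\<^sup>H\<^sup>H ** A\<^sup>H ** M2\<^sup>H"
    using arg_cong[OF assms, of conj_transpose] by (simp add: conj_transpose_mult matrix_mul_assoc)
  then have "A\<^sup>H ** M1\<^sup>H = A\<^sup>H ** M2\<^sup>H"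
    by (rule gram_cancel_left)
  then have "(M1 ** A)\<^sup>H = (M2 ** A)\<^sup>H"
    by (simp add: conj_transpose_mult)
  then show ?thesis
    by (metis conj_transpose_conj_transpose)
qed

definition moore_penrose :: "complex ^ 'n ^ 'm \<Rightarrow> complex ^ 'm ^ 'n \<Rightarrow> bool" where
  "moore_penrose A X \<longleftrightarrow>
     A ** X ** A = A \<and> X ** A ** X = X \<and> (A ** X)\<^sup>H = A ** X \<and> (X ** A)\<^sup>H = X ** A"

lemma moore_penrose_unique:
  assumes "moore_penrose A X" "moore_penrose A Y"
  shows "X = Y"
proof -
  have X: "A ** X ** A = A" "X ** A ** X = X" "(A ** X)\<^sup>H = A ** X" "(X ** A)\<^sup>H = X ** A"
    using assms(1) unfolding moore_penrose_def by auto
  have Y: "A ** Y ** A = A" "Y ** A ** Y = Y" "(A ** Y)\<^sup>H = A ** Y" "(Y ** A)\<^sup>H = Y ** A"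
    using assms(2) unfolding moore_penrose_def by auto
  have "X = X ** (A ** X)"
    using X(2) by (simp add: matrix_mul_assoc)
  also have "\<dots> = X ** (A ** X)\<^sup>H"
    using X(3) by simp
  also have "\<dots> = X ** X\<^sup>H ** (A ** Y ** A)\<^sup>H"
    using Y(1) by (simp add: conj_transpose_mult matrix_mul_assoc)
  also have "\<dots> = X ** (A ** X)\<^sup>H ** (A ** Y)\<^sup>H"
    by (simp add: conj_transpose_mult matrix_mul_assoc)
  also have "\<dots> = X ** A ** Y"
    using X(2,3) Y(3) by (simp add: matrix_mul_assoc)
  finally have XAY: "X = X ** A ** Y" .
  have "Y = (Y ** A)\<^sup>H ** Y"
    using Y(2,4) by simp
  also have "\<dots> = (A ** X ** A)\<^sup>H ** Y\<^sup>H ** Y"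
    using X(1) by (simp add: conj_transpose_mult)
  also have "\<dots> = (X ** A)\<^sup>H ** (Y ** A)\<^sup>H ** Y"
    by (simp add: conj_transpose_mult matrix_mul_assoc)
  also have "\<dots> = X ** A ** (Y ** A ** Y)"
    using X(4) Y(4) by (simp add: matrix_mul_assoc)
  also have "\<dots> = X ** A ** Y"
    using Y(2) by simp
  finally show ?thesis
    using XAY by simp
qed

lemma pinv_eqI: "moore_penrose A X \<Longrightarrow> pinv A = X"
  unfolding pinv_def using moore_penrose_unique
  by (intro the_equality) (auto simp: moore_penrose_def)

lemma hermitian_if_eq_mult_conj_transpose:
  assumes "P = P ** P\<^sup>H"
  shows "P\<^sup>H = P"
proof -
  have "P\<^sup>H = (P ** P\<^sup>H)\<^sup>H"
    using arg_cong[OF assms, of conj_transpose] .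
  also have "\<dots> = P ** P\<^sup>H"
    by (simp add: conj_transpose_mult)
  also have "\<dots> = P"
    by (rule assms[symmetric])
  finally show ?thesis .
qed

lemma hermitian_if_eq_conj_transpose_mult:
  assumes "P = P\<^sup>H ** P"
  shows "P\<^sup>H = P"
proof -
  have "P\<^sup>H = (P\<^sup>H ** P)\<^sup>H"
    using arg_cong[OF assms, of conj_transpose] .
  also have "\<dots> = P\<^sup>H ** P"
    by (simp add: conj_transpose_mult)
  also have "\<dots> = P"
    by (rule assms[symmetric])
  finally show ?thesis .
qed

lemma conj_transpose_sandwich_ginv:
  fixes A :: "complex ^ 'n ^ 'm"
  assumes "(A\<^sup>H ** A ** A\<^sup>H) ** G ** (A\<^sup>H ** A ** A\<^sup>H) = A\<^sup>H ** A ** A\<^sup>H"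
  shows "A ** (A\<^sup>H ** G ** A\<^sup>H) ** A = A"
proof -
  have "A\<^sup>H ** A ** (A\<^sup>H ** G ** A\<^sup>H ** A ** A\<^sup>H) = A\<^sup>H ** A ** A\<^sup>H"
    using assms by (simp only: matrix_mul_assoc)
  then have "A ** (A\<^sup>H ** G ** A\<^sup>H ** A ** A\<^sup>H) = A ** A\<^sup>H"
    by (rule gram_cancel_left)
  then have "(A ** A\<^sup>H ** G ** A\<^sup>H) ** A ** A\<^sup>H = mat 1 ** A ** A\<^sup>H"
    by (simp add: matrix_mul_assoc)
  then have "(A ** A\<^sup>H ** G ** A\<^sup>H) ** A = mat 1 ** A"
    by (rule gram_cancel_right)
  then show ?thesis
    by (simp add: matrix_mul_assoc)
qed

lemma moore_penrose_conj_transpose_ginv: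
  fixes A :: "complex ^ 'n ^ 'm"
  assumes "(A\<^sup>H ** A ** A\<^sup>H) ** G ** (A\<^sup>H ** A ** A\<^sup>H) = A\<^sup>H ** A ** A\<^sup>H"
  shows "moore_penrose A (A\<^sup>H ** G ** A\<^sup>H)"
proof -
  define X where "X = A\<^sup>H ** G ** A\<^sup>H"
  have AXA: "A ** X ** A = A"
    unfolding X_def by (rule conj_transpose_sandwich_ginv[OF assms])
  have AX_A: "A\<^sup>H ** (A ** X)\<^sup>H = A\<^sup>H" and XA_A: "(X ** A)\<^sup>H ** A\<^sup>H = A\<^sup>H"
    using arg_cong[OF AXA, of conj_transpose] by (simp_all add: conj_transpose_mult matrix_mul_assoc)
  have "A ** X = (A ** A\<^sup>H ** G) ** (A\<^sup>H ** (A ** X)\<^sup>H)"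
    unfolding AX_A by (simp add: X_def matrix_mul_assoc)
  then have AX: "(A ** X)\<^sup>H = A ** X"
    by (intro hermitian_if_eq_mult_conj_transpose) (simp add: X_def matrix_mul_assoc)
  have "X ** A = ((X ** A)\<^sup>H ** A\<^sup>H) ** (G ** A\<^sup>H ** A)"
    unfolding XA_A by (simp add: X_def matrix_mul_assoc)
  then have XA: "(X ** A)\<^sup>H = X ** A"
    by (intro hermitian_if_eq_conj_transpose_mult) (simp add: X_def matrix_mul_assoc)
  have "X ** A ** X = (A\<^sup>H ** G) ** (A\<^sup>H ** (A ** X))"
    by (simp add: X_def matrix_mul_assoc)
  also have "\<dots> = X"
    using AX_A AX by (simp add: X_def matrix_mul_assoc)
  finally show ?thesis
    unfolding moore_penrose_def X_def[symmetric] using AXA AX XA by blast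
qed

lemma moore_penrose_normal_eq:
  assumes "moore_penrose A X"
  shows "A\<^sup>H ** A ** X = A\<^sup>H"
proof -
  have "A\<^sup>H ** A ** X = A\<^sup>H ** (A ** X)\<^sup>H"
    using assms unfolding moore_penrose_def by (simp add: matrix_mul_assoc)
  also have "\<dots> = (A ** X ** A)\<^sup>H"
    by (simp add: conj_transpose_mult)
  finally show ?thesis
    using assms unfolding moore_penrose_def by simp
qed

lemma sum_cnj_mult_matrix_vector:
  fixes A :: "complex ^ 'n ^ 'm"
  shows "(\<Sum>i\<in>UNIV. cnj ((A *v z) $ i) * w $ i) = (\<Sum>j\<in>UNIV. cnj (z $ j) * (A\<^sup>H *v w) $ j)"
proof -
  have "(\<Sum>i\<in>UNIV. cnj ((A *v z) $ i) * w $ i)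
      = (\<Sum>i\<in>UNIV. \<Sum>j\<in>UNIV. cnj (A $ i $ j) * cnj (z $ j) * w $ i)"
    by (simp add: matrix_vector_mult_def cnj_sum sum_distrib_right)
  also have "\<dots> = (\<Sum>j\<in>UNIV. \<Sum>i\<in>UNIV. cnj (A $ i $ j) * cnj (z $ j) * w $ i)"
    by (rule sum.swap)
  also have "\<dots> = (\<Sum>j\<in>UNIV. cnj (z $ j) * (A\<^sup>H *v w) $ j)"
    by (simp add: matrix_vector_mult_def conj_transpose_def sum_distrib_left mult_ac)
  finally show ?thesis .
qed

lemma cmod_add_power2: "(cmod (a + b))\<^sup>2 = (cmod a)\<^sup>2 + (cmod b)\<^sup>2 + 2 * Re (cnj a * b)"
  unfolding cmod_power2 by (simp add: power2_eq_square algebra_simps)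

lemma moore_penrose_least_squares:
  fixes A :: "complex ^ 'n ^ 'm"
  assumes "moore_penrose A X"
  shows "vec_norm2 (A *v (X *v b) - b) \<le> vec_norm2 (A *v x - b)"
proof -
  define u where "u = A *v (x - X *v b)"
  define w where "w = A *v (X *v b) - b"
  have "A\<^sup>H *v w = 0"
    unfolding w_def using moore_penrose_normal_eq[OF assms]
    by (simp add: matrix_vector_mult_diff_distrib matrix_vector_mul_assoc matrix_mul_assoc)
  then have orth: "(\<Sum>i\<in>UNIV. cnj (u $ i) * w $ i) = 0"
    unfolding u_def sum_cnj_mult_matrix_vector by simp
  have "A *v x - b = u + w"
    unfolding u_def w_def by (simp add: matrix_vector_mult_diff_distrib)
  then have "(\<Sum>i\<in>UNIV. (cmod ((A *v x - b) $ i))\<^sup>2)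
      = (\<Sum>i\<in>UNIV. (cmod (u $ i))\<^sup>2) + (\<Sum>i\<in>UNIV. (cmod (w $ i))\<^sup>2)
        + 2 * Re (\<Sum>i\<in>UNIV. cnj (u $ i) * w $ i)"
    by (simp add: cmod_add_power2 sum.distrib sum_distrib_left Re_sum)
  also have "\<dots> \<ge> (\<Sum>i\<in>UNIV. (cmod (w $ i))\<^sup>2)"
    unfolding orth by (simp add: sum_nonneg)
  finally show ?thesis
    unfolding vec_norm2_def w_def by (rule real_sqrt_le_mono)
qed

lemma Inf_residual_norm_eq:
  fixes A :: "complex ^ 'n ^ 'm"
  assumes "moore_penrose A X"
  shows "Inf (range (\<lambda>x. vec_norm2 (A *v x - b))) = vec_norm2 (A *v (X *v b) - b)"
  using moore_penrose_least_squares[OF assms] by (intro cInf_eq_minimum) auto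

section \<open>Computable matrices and norms\<close>

lemma computable_mat_mult:
  "computable_mat A \<Longrightarrow> computable_mat B \<Longrightarrow> computable_mat (A ** B)"
  unfolding computable_mat_def matrix_matrix_mult_def
  by (auto intro!: computable_complex_sum computable_complex_mult)

lemma computable_mat_conj_transpose: "computable_mat A \<Longrightarrow> computable_mat (A\<^sup>H)"
  unfolding computable_mat_def conj_transpose_def by (auto intro!: computable_complex_cnj)

lemma computable_vec_matrix_vector_mult:
  "computable_mat A \<Longrightarrow> computable_vec x \<Longrightarrow> computable_vec (A *v x)"
  unfolding computable_mat_def computable_vec_def matrix_vector_mult_def
  by (auto intro!: computable_complex_sum computable_complex_mult)

lemma computable_vec_diff: "computable_vec x \<Longrightarrow> computable_vec y \<Longrightarrow> computable_vec (x - y)"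
  unfolding computable_vec_def by (auto intro!: computable_complex_diff)

lemma computable_real_frob_norm: "computable_mat A \<Longrightarrow> computable_real (frob_norm A)"
  unfolding computable_mat_def frob_norm_def
  by (auto intro!: computable_real_sqrt computable_real_sum computable_real_power2
      computable_real_cmod)

lemma computable_real_vec_norm2: "computable_vec v \<Longrightarrow> computable_real (vec_norm2 v)"
  unfolding computable_vec_def vec_norm2_def
  by (auto intro!: computable_real_sqrt computable_real_sum computable_real_power2
      computable_real_cmod)

theorem theorem3p7:
  fixes A :: "complex ^ 'n ^ 'm" and b :: "complex ^ 'm"
  assumes "computable_mat A" and "computable_vec b"
  shows "computable_mat (pinv A)
       \<and> computable_real (frob_norm (pinv A))
       \<and> computable_real (Inf (range (\<lambda>x::complex ^ 'n. vec_norm2 (A *v x - b))))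
       \<and> computable_vec (pinv A *v b)
       \<and> computable_real (vec_norm2 (pinv A *v b))
       \<and> computable_real (frob_norm A * frob_norm (pinv A))"
proof -
  have "computable_mat (A\<^sup>H ** A ** A\<^sup>H)"
    using assms(1) by (intro computable_mat_mult computable_mat_conj_transpose)
  then obtain G where G: "computable_mat G"
    "(A\<^sup>H ** A ** A\<^sup>H) ** G ** (A\<^sup>H ** A ** A\<^sup>H) = A\<^sup>H ** A ** A\<^sup>H"
    using exists_computable_generalized_inverse by blast
  have pinv: "pinv A = A\<^sup>H ** G ** A\<^sup>H"
    by (rule pinv_eqI[OF moore_penrose_conj_transpose_ginv[OF G(2)]])
  then have mp: "moore_penrose A (pinv A)"
    using moore_penrose_conj_transpose_ginv[OF G(2)] by simp
  have "computable_mat (pinv A)"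
    unfolding pinv using assms(1) G(1)
    by (intro computable_mat_mult computable_mat_conj_transpose)
  then show ?thesis
    using assms
    by (auto simp: Inf_residual_norm_eq[OF mp] intro!: computable_real_frob_norm
        computable_real_vec_norm2 computable_real_mult computable_vec_diff
        computable_vec_matrix_vector_mult)
qed

end
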